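(* For $\lambda>0$ and $c>0$, let $V\sim\mathrm{Exp}(\lambda)$ and define the creator's expected profit $$P(p_0,r)=\mathbb{E}\big[(p_0+rV)\,\mathbb{1}_{\{(1-r)V\ge p_0\}}\big]+p_0\,\Pr\big[(1-r)V<p_0\le V\big]-c,\qquad p_0\ge 0,\ r\in[0,1].$$ Let $u_c^*=\sup_{p_0\ge 0,r\in[0,1]}P(p_0,r)$ and $u_{c,r=0}^*=\sup_{p_0\ge0}P(p_0,0)$. Then the set $\mathbb{T}=\{(\lambda,c):\ u_c^*\ge 0,\ u_{c,r=0}^*<0,\ \lambda>0,\ c>0\}$ is non-empty.
   Context: Interpretation: information-asymmetry model in which a speculator observes the realized end-buyer valuation $v$, buys at price $p_0$ iff $(1-r)v\ge p_0$ and resells at $v$ paying royalty $rv$ to the creator; otherwise the creator sells directly to the end-buyer at $p_0$ iff $v\ge p_0$. $c$ is the creator's cost. Trade occurs iff the optimal profit is nonnegative. *)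

theory Defs
  imports "HOL-Probability.Probability"
begin

definition exp_law :: "real \<Rightarrow> real measure" where
  "exp_law l = density lborel (exponential_density l)"

definition creator_profit :: "real \<Rightarrow> real \<Rightarrow> real \<Rightarrow> real \<Rightarrow> real" where
  "creator_profit l c p0 r =
     (\<integral>v. (p0 + r * v) * indicator {v. (1 - r) * v \<ge> p0} v \<partial>exp_law l)
     + p0 * measure (exp_law l) {v. (1 - r) * v < p0 \<and> p0 \<le> v}
     - c"

definition u_star :: "real \<Rightarrow> real \<Rightarrow> real" where
  "u_star l c = (SUP pr \<in> {(p0, r). p0 \<ge> 0 \<and> 0 \<le> r \<and> r \<le> 1}. creator_profit l c (fst pr) (snd pr))"

definition u_star_r0 :: "real \<Rightarrow> real \<Rightarrow> real" where
  "u_star_r0 l c = (SUP p0 \<in> {0..}. creator_profit l c p0 0)"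

end

theory Submission
  imports Defs
begin

text \<open>With full royalty and zero price (\<open>r = 1\<close>, \<open>p\<^sub>0 = 0\<close>) the creator captures the whole
  valuation and earns \<open>E[V] = 1/\<lambda>\<close>, whereas without royalty the best posted price only yields
  \<open>max\<^sub>p p e\<^sup>-\<^sup>\<lambda>\<^sup>p = 1/(e\<lambda>)\<close>. Any cost \<open>c\<close> with \<open>1/(e\<lambda>) < c \<le> 1/\<lambda>\<close>, e.g. \<open>(\<lambda>, c) = (1, 1)\<close>,
  therefore lies in \<open>\<T>\<close>.\<close>

lemma mult_exp_minus_le: "(x::real) * exp (- x) \<le> exp (- 1)"
proof -
  have "x * exp (- x) \<le> exp (x - 1) * exp (- x)"
    using exp_ge_add_one_self[of "x - 1"] by (intro mult_right_mono) auto
  also have "\<dots> = exp (- 1)"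
    by (simp flip: exp_add)
  finally show ?thesis .
qed

lemma mult_exp_minus_scaled_le:
  assumes "0 < l"
  shows "(p::real) * exp (- p * l) \<le> exp (- 1) / l"
  using mult_exp_minus_le[of "p * l"] assms by (simp add: field_simps)

lemma sets_exp_law [simp, measurable_cong]: "sets (exp_law l) = sets borel"
  by (simp add: exp_law_def)

lemma space_exp_law [simp]: "space (exp_law l) = UNIV"
  by (simp add: exp_law_def)

lemma prob_space_exp_law: "0 < l \<Longrightarrow> prob_space (exp_law l)"
  unfolding exp_law_def by (rule prob_space_exponential_density)

lemma distributed_exp_law: "distributed (exp_law l) lborel (\<lambda>x. x) (exponential_density l)"
  by (auto simp: distributed_def distr_id2 exp_law_def)

lemma AE_exp_law_nonneg: "AE v in exp_law l. 0 \<le> v"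
  unfolding exp_law_def by (subst AE_density) (auto simp: exponential_density_def)

lemma integrable_exp_law_id: "0 < l \<Longrightarrow> integrable (exp_law l) (\<lambda>v. v)"
  using prob_space.erlang_ith_moment_integrable[OF prob_space_exp_law _ distributed_exp_law, of l 1]
  by simp

lemma integral_exp_law_id: "0 < l \<Longrightarrow> (\<integral>v. v \<partial>exp_law l) = 1 / l"
  using prob_space.exponential_distributed_expectation[OF prob_space_exp_law _ distributed_exp_law]
  by simp

lemma singleton_null_exp_law: "{a} \<in> null_sets (exp_law l)"
proof -
  have "AE x in lborel. x \<in> {a} \<longrightarrow> exponential_density l x = 0"
    using AE_lborel_singleton[of a] by eventually_elim simp
  then show ?thesis
    unfolding exp_law_def by (subst null_sets_density_iff) auto
qed

lemma measure_exp_law_ge: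
  assumes "0 < l" "0 \<le> a"
  shows "measure (exp_law l) {x. a \<le> x} = exp (- a * l)"
proof -
  have "{x. a \<le> x} = {x. a < x} \<union> {a}"
    by auto
  then have "measure (exp_law l) {x. a \<le> x} = measure (exp_law l) {x. a < x}"
    using measure_Un_null_set[OF _ singleton_null_exp_law] by simp
  also have "\<dots> = exp (- a * l)"
    using prob_space.exponential_distributedD_gt[OF prob_space_exp_law distributed_exp_law] assms
    by simp
  finally show ?thesis .
qed

lemma creator_profit_no_royalty:
  assumes "0 < l" "0 \<le> p0"
  shows "creator_profit l c p0 0 = p0 * exp (- p0 * l) - c"
proof -
  have posted_price_sales: "(\<integral>v. (p0 + 0 * v) * indicator {v. (1 - 0) * v \<ge> p0} v \<partial>exp_law l)
      = p0 * exp (- p0 * l)"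
    using measure_exp_law_ge[OF assms] by simp
  have no_resale: "{v. (1 - 0) * v < p0 \<and> p0 \<le> v} = {}"
    by auto
  show ?thesis
    unfolding creator_profit_def posted_price_sales no_resale by simp
qed

lemma creator_profit_full_royalty: "0 < l \<Longrightarrow> creator_profit l c 0 1 = 1 / l - c"
  unfolding creator_profit_def using integral_exp_law_id by simp

lemma creator_profit_le:
  assumes l: "0 < l" and p0: "0 \<le> p0" and r: "0 \<le> r" "r \<le> 1"
  shows "creator_profit l c p0 r \<le> 1 / l + exp (- 1) / l - c"
proof -
  interpret prob_space "exp_law l"
    using l by (rule prob_space_exp_law)
  let ?f = "\<lambda>v. (p0 + r * v) * indicator {v. (1 - r) * v \<ge> p0} v"
  have royalty_sales: "(\<integral>v. ?f v \<partial>exp_law l) \<le> 1 / l"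
  proof (cases "integrable (exp_law l) ?f")
    case True
    have "AE v in exp_law l. ?f v \<le> v"
      using AE_exp_law_nonneg by eventually_elim (auto simp: indicator_def algebra_simps)
    then have "(\<integral>v. ?f v \<partial>exp_law l) \<le> (\<integral>v. v \<partial>exp_law l)"
      by (rule integral_mono_AE[OF True integrable_exp_law_id[OF l]])
    then show ?thesis
      using integral_exp_law_id[OF l] by simp
  next
    case False
    then show ?thesis
      using l by (simp add: not_integrable_integral_eq)
  qed
  have "measure (exp_law l) {v. (1 - r) * v < p0 \<and> p0 \<le> v} \<le> measure (exp_law l) {v. p0 \<le> v}"
    by (intro finite_measure_mono) auto
  then have "p0 * measure (exp_law l) {v. (1 - r) * v < p0 \<and> p0 \<le> v} \<le> p0 * exp (- p0 * l)"
    using measure_exp_law_ge[OF l p0] p0 by (simp add: mult_left_mono)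
  also have "\<dots> \<le> exp (- 1) / l"
    using mult_exp_minus_scaled_le[OF l] .
  finally show ?thesis
    using royalty_sales unfolding creator_profit_def by simp
qed

lemma creator_profit_le_u_star:
  assumes "0 < l" "0 \<le> p0" "0 \<le> r" "r \<le> 1"
  shows "creator_profit l c p0 r \<le> u_star l c"
  unfolding u_star_def
proof (rule cSUP_upper2)
  show "bdd_above ((\<lambda>pr. creator_profit l c (fst pr) (snd pr)) ` {(p0, r). p0 \<ge> 0 \<and> 0 \<le> r \<and> r \<le> 1})"
    using creator_profit_le[OF \<open>0 < l\<close>] by (intro bdd_aboveI) auto
qed (use assms in auto)

lemma u_star_ge: "0 < l \<Longrightarrow> 1 / l - c \<le> u_star l c"
  using creator_profit_le_u_star[of l 0 1 c] creator_profit_full_royalty[of l c] by simp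

lemma u_star_r0_le:
  assumes "0 < l"
  shows "u_star_r0 l c \<le> exp (- 1) / l - c"
  unfolding u_star_r0_def
proof (rule cSUP_least)
  fix p0 :: real
  assume "p0 \<in> {0..}"
  then show "creator_profit l c p0 0 \<le> exp (- 1) / l - c"
    using creator_profit_no_royalty[OF assms] mult_exp_minus_scaled_le[OF assms, of p0] by simp
qed simp

theorem corollary5:
  shows "{(l, c). u_star l c \<ge> 0 \<and> u_star_r0 l c < 0 \<and> l > 0 \<and> c > 0} \<noteq> ({} :: (real \<times> real) set)"
proof -
  have "0 \<le> u_star 1 1"
    using u_star_ge[of 1 1] by simp
  moreover have "u_star_r0 1 1 < 0"
    using u_star_r0_le[of 1 1] exp_less_one_iff[of "- 1"] by linarith
  ultimately have "(1, 1) \<in> {(l, c). u_star l c \<ge> 0 \<and> u_star_r0 l c < 0 \<and> l > 0 \<and> (c::real) > 0}"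
    by simp
  then show ?thesis
    by blast
qed

end
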